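(* Consider the Black-Scholes model and the Bermudan moving average option described in the context, with continuation value functions $\mathcal{C}_n$, $n\in\{M,\dots,N\}$. Then for every $n\in\{M,\dots,N\}$, every positive real number $\kappa$ and every admissible value $\mathbf{b}$ of $\mathbf{B}_n$ (a vector of positive reals of the appropriate dimension), \[ \mathcal{C}_n(\mathbf{b})=\kappa\,\mathcal{C}_n\!\left(\tfrac{1}{\kappa}\mathbf{b}\right), \] i.e. the continuation value is positively homogeneous of degree one.
   Context: Under a risk-neutral probability the underlying follows the Black-Scholes dynamics $dS_t/S_t=r\,dt+\sigma\,dB_t$ with constants $r$, $\sigma>0$, $S_0>0$, and $(B_t)$ a Brownian motion; hence conditionally on $S_{t_n}$, $S_{t_{n+1}}=S_{t_n}\exp\big((r-\sigma^2/2)\Delta t+\sigma\sqrt{\Delta t}\,G\big)$ with $G\sim\mathcal N(0,1)$ independent of the past. Fix a maturity $T>0$, integers $2\le M\le N$, $\Delta t=T/N$, $t_n=n\Delta t$. For $0\le n_1\le n_2\le N$ let $A_{n_1}^{n_2}=\frac{1}{n_2-n_1+1}\sum_{j=n_1}^{n_2}S_{t_j}$ (so $A_n^n=S_{t_n}$). For $n\in\{M,\dots,N\}$ let $J_n=\{n-M+1,\dots,\min\{n-1,N-M+1\}\}\cup\{n\}$ and define the vector of partial averages $\mathbf{A}_n=(A_j^n)_{j\in J_n}$ (in increasing order of $j$) and $\mathbf{B}_n=(A_j^n)_{j\in J_n,\ j\ge n-M+2}$, i.e. $\mathbf{A}_n$ with its first component $A_{n-M+1}^n$ removed. The components of $\mathbf{A}_{n+1}$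 are $A_{n+1}^{n+1}=S_{t_{n+1}}$ and $A_j^{n+1}=\frac{(n-j+1)A_j^n+S_{t_{n+1}}}{n-j+2}$, and these are functions of $\mathbf{B}_n$ and $S_{t_{n+1}}$. The payoff at $t_n$ is $\Psi_n(\mathbf{A}_n)=\max(0,A_n^n-A_{n-M+1}^n)$, and the option may be exercised at any $t_n$, $n=M,\dots,N$. The continuation values are defined by backward recursion: $\mathcal{C}_N\equiv 0$, $\mathcal{V}_n(\mathbf{A}_n)=\max(\Psi_n(\mathbf{A}_n),\mathcal{C}_n(\mathbf{B}_n))$, and for $n=N-1,\dots,M$, $\mathcal{C}_n(\mathbf{B}_n)=\mathbb{E}\big[e^{-r\Delta t}\mathcal{V}_{n+1}(\mathbf{A}_{n+1})\,\big|\,\mathbf{B}_n\big]$, viewed as a function of the value of $\mathbf{B}_n$. *)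

theory Defs
  imports "HOL-Probability.Probability"
begin

text \<open>Vectors of partial averages indexed by the starting index j are represented
  as functions nat => real, restricted (FuncSet.restrict) to their index set.\<close>

definition Jidx :: "nat \<Rightarrow> nat \<Rightarrow> nat \<Rightarrow> nat set" where
  "Jidx N M n = {n - M + 1 .. min (n - 1) (N - M + 1)} \<union> {n}"

definition JBidx :: "nat \<Rightarrow> nat \<Rightarrow> nat \<Rightarrow> nat set" where
  "JBidx N M n = {j \<in> Jidx N M n. n - M + 2 \<le> j}"

definition payoff :: "nat \<Rightarrow> nat \<Rightarrow> (nat \<Rightarrow> real) \<Rightarrow> real" where
  "payoff M n a = max 0 (a n - a (n - M + 1))"

definition gauss :: "real measure" where
  "gauss = density lborel std_normal_density"

definition next_spot :: "real \<Rightarrow> real \<Rightarrow> real \<Rightarrow> nat \<Rightarrow> real \<Rightarrow> real \<Rightarrow> real" where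
  "next_spot r \<sigma> T N s g = s * exp ((r - \<sigma>^2/2) * (T / real N) + \<sigma> * sqrt (T / real N) * g)"

text \<open>A_{n+1} computed from B_n (= b) and S_{t_{n+1}} (= s).\<close>
definition next_avg :: "nat \<Rightarrow> nat \<Rightarrow> nat \<Rightarrow> (nat \<Rightarrow> real) \<Rightarrow> real \<Rightarrow> (nat \<Rightarrow> real)" where
  "next_avg N M n b s = restrict (\<lambda>j. if j = n + 1 then s
        else ((real (n - j + 1)) * b j + s) / real (n - j + 2)) (Jidx N M (n + 1))"

text \<open>Continuation value with k steps remaining, i.e. at time index n = N - k,
  applied to the vector B_n.\<close>
fun cv :: "real \<Rightarrow> real \<Rightarrow> real \<Rightarrow> nat \<Rightarrow> nat \<Rightarrow> nat \<Rightarrow> (nat \<Rightarrow> real) \<Rightarrow> real" where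
  "cv r \<sigma> T N M 0 b = 0"
| "cv r \<sigma> T N M (Suc k) b =
     (let n = N - Suc k in
      \<integral>g. exp (- r * (T / real N)) *
          (let a = next_avg N M n b (next_spot r \<sigma> T N (b n) g) in
             max (payoff M (n + 1) a) (cv r \<sigma> T N M k (restrict a (JBidx N M (n + 1)))))
      \<partial>gauss)"

definition contval :: "real \<Rightarrow> real \<Rightarrow> real \<Rightarrow> nat \<Rightarrow> nat \<Rightarrow> nat \<Rightarrow> (nat \<Rightarrow> real) \<Rightarrow> real" where
  "contval r \<sigma> T N M n b = cv r \<sigma> T N M (N - n) (restrict b (JBidx N M n))"

end

theory Submission
  imports Defs
begin

text \<open>Scaling the vector of partial averages by \<open>c > 0\<close> scales the next spot and every
  updated partial average by \<open>c\<close>, hence the payoff, a positive part of a difference of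
  averages; by backward induction and linearity of the discounted expectation it scales the
  continuation value by \<open>c\<close>.\<close>

lemma next_spot_scale: "next_spot r \<sigma> T N (c * s) g = c * next_spot r \<sigma> T N s g"
  unfolding next_spot_def by simp

lemma Jidx_succ_subset_JBidx:
  assumes "2 \<le> M" and "M \<le> n"
  shows "Jidx N M (n + 1) - {n + 1} \<subseteq> JBidx N M n"
  using assms unfolding JBidx_def Jidx_def by auto

lemma self_in_JBidx:
  assumes "2 \<le> M" and "M \<le> n"
  shows "n \<in> JBidx N M n"
  using assms unfolding JBidx_def Jidx_def by auto

lemma payoff_indices_in_Jidx:
  assumes "2 \<le> M" and "M \<le> n" and "n \<le> N"
  shows "n \<in> Jidx N M n" and "n - M + 1 \<in> Jidx N M n"
  using assms unfolding Jidx_def by auto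

lemma next_avg_scale:
  assumes "\<forall>j \<in> Jidx N M (n + 1) - {n + 1}. b' j = c * b j"
    and "j \<in> Jidx N M (n + 1)"
  shows "next_avg N M n b' (c * s) j = c * next_avg N M n b s j"
  using assms unfolding next_avg_def by (auto simp: field_simps)

lemma payoff_scale:
  fixes c :: real
  assumes "c > 0" and "a' n = c * a n" and "a' (n - M + 1) = c * a (n - M + 1)"
  shows "payoff M n a' = c * payoff M n a"
  using assms unfolding payoff_def
  by (simp add: max_mult_distrib_left right_diff_distrib[symmetric])

text \<open>With \<open>k\<close> dates remaining, \<open>cv\<close> reads its argument only on \<open>JBidx N M (N - k)\<close>, so
  \<open>b'\<close> and \<open>b\<close> need only be related there; this absorbs the restrictions inside \<open>cv\<close>.\<close>

lemma cv_scale: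
  fixes c :: real
  assumes "c > 0" and "2 \<le> M" and "k \<le> N - M"
    and "\<forall>j \<in> JBidx N M (N - k). b' j = c * b j"
  shows "cv r \<sigma> T N M k b' = c * cv r \<sigma> T N M k b"
  using assms(3,4)
proof (induction k arbitrary: b' b)
  case 0
  then show ?case by simp
next
  case (Suc k)
  define n where "n = N - Suc k"
  have "M \<le> n" and "n + 1 \<le> N" and Nk: "N - k = n + 1"
    using Suc.prems(1) assms(2) unfolding n_def by auto
  define V where "V b s = (let a = next_avg N M n b s in
      max (payoff M (n + 1) a) (cv r \<sigma> T N M k (restrict a (JBidx N M (n + 1)))))" for b s
  have b'_n: "b' n = c * b n"
    using Suc.prems(2) self_in_JBidx[OF assms(2) \<open>M \<le> n\<close>] unfolding n_def by simp
  have V_scale: "V b' (c * s) = c * V b s" for s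
  proof -
    define a where "a = next_avg N M n b s"
    have "\<forall>j \<in> Jidx N M (n + 1) - {n + 1}. b' j = c * b j"
      using Suc.prems(2) Jidx_succ_subset_JBidx[OF assms(2) \<open>M \<le> n\<close>] unfolding n_def by auto
    then have a'_scale: "next_avg N M n b' (c * s) j = c * a j" if "j \<in> Jidx N M (n + 1)" for j
      using next_avg_scale that unfolding a_def by blast
    have "payoff M (n + 1) (next_avg N M n b' (c * s)) = c * payoff M (n + 1) a"
      using payoff_indices_in_Jidx[OF assms(2) _ \<open>n + 1 \<le> N\<close>] \<open>M \<le> n\<close>
      by (intro payoff_scale assms(1)) (auto intro: a'_scale)
    moreover have "cv r \<sigma> T N M k (restrict (next_avg N M n b' (c * s)) (JBidx N M (n + 1)))
        = c * cv r \<sigma> T N M k (restrict a (JBidx N M (n + 1)))"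
    proof (rule Suc.IH)
      show "\<forall>j \<in> JBidx N M (N - k).
          restrict (next_avg N M n b' (c * s)) (JBidx N M (n + 1)) j
          = c * restrict a (JBidx N M (n + 1)) j"
        using a'_scale unfolding Nk JBidx_def by simp
    qed (use Suc.prems(1) in simp)
    ultimately show ?thesis
      using assms(1) unfolding V_def a_def[symmetric] Let_def by (simp add: max_mult_distrib_left)
  qed
  have "cv r \<sigma> T N M (Suc k) b' = (\<integral>g. exp (- r * (T / real N)) * V b' (next_spot r \<sigma> T N (b' n) g) \<partial>gauss)"
    by (simp add: V_def n_def Let_def)
  also have "\<dots> = (\<integral>g. c * (exp (- r * (T / real N)) * V b (next_spot r \<sigma> T N (b n) g)) \<partial>gauss)"
    unfolding b'_n next_spot_scale V_scale by (simp add: mult.left_commute)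
  also have "\<dots> = c * cv r \<sigma> T N M (Suc k) b"
    by (simp add: V_def n_def Let_def)
  finally show ?case .
qed

theorem proposition1:
  fixes r \<sigma> T \<kappa> :: real and N M n :: nat and b :: "nat \<Rightarrow> real"
  assumes "\<sigma> > 0" and "T > 0" and "2 \<le> M" and "M \<le> N"
    and "M \<le> n" and "n \<le> N" and "\<kappa> > 0"
    and "\<forall>j \<in> JBidx N M n. b j > 0"
  shows "contval r \<sigma> T N M n b = \<kappa> * contval r \<sigma> T N M n (\<lambda>j. (1 / \<kappa>) * b j)"
proof -
  have "N - (N - n) = n" and "N - n \<le> N - M"
    using assms by auto
  then show ?thesis
    unfolding contval_def using assms
    by (intro cv_scale) auto
qed

end
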